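(* Fix $p\in(1,\infty)$ and Radon measures $\mu,\nu$ on $\mathbb{R}^N$. Let $K$ be a singular kernel on $\mathbb{R}^N$ (with respect to $\mu,\nu$) which is restrictedly $L^p$ bounded with bound $C$. Let $\rho\in L^1(\mathbb{R}^N,dx)$, and put $M=1-\widehat\rho$ and $M_\varepsilon(x):=M(x/\varepsilon)$ for $\varepsilon>0$. Then for every $\varepsilon>0$ the kernel $K_\varepsilon(s,t):=K(s,t)M_\varepsilon(t-s)$ is restrictedly $L^p$ bounded with bound $(1+\|\rho\|_{L^1(dx)})\,C$.
   Context: A singular kernel on $\mathbb{R}^N$ (with respect to Radon measures $\mu,\nu$) is a $\mu\times\nu$-measurable (complex-valued) function $K$ on $\mathbb{R}^N\times\mathbb{R}^N$ which is locally in $L^2(\mu\times\nu)$ off the diagonal $\{(s,t):s=t\}$. Such a kernel is restrictedly $L^p$ bounded with bound $C$ (i.e. as a formal operator $L^p(\mu)\to L^p(\nu)$) if $\left|\int K(s,t)f(t)g(s)\,d\mu(t)\,d\nu(s)\right|\le C\|f\|_{L^p(\mu)}\|g\|_{L^{p'}(\nu)}$, $1/p+1/p'=1$, for all bounded Borel functions $f,g$ with compact supports satisfying $\operatorname{dist}(\operatorname{supp}f,\operatorname{supp}g)>0$. The Fourier transform is $\widehat\rho(s)=\int_{\mathbb{R}^N}\rho(x)e^{-is\cdot x}\,dx$. *)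

theory Defs
  imports "HOL-Analysis.Analysis"
begin

text \<open>Radon measure on the Euclidean space 'a: a Borel measure which is finite on compact sets
  (on R^N local finiteness implies regularity).\<close>
definition radon_measure :: "'a::euclidean_space measure \<Rightarrow> bool" where
  "radon_measure M \<longleftrightarrow> sets M = sets borel \<and> (\<forall>A. compact A \<longrightarrow> emeasure M A < \<infinity>)"

definition kernel_measure :: "'a::euclidean_space measure \<Rightarrow> 'a measure \<Rightarrow> ('a \<times> 'a) measure" where
  "kernel_measure \<mu> \<nu> = completion (\<nu> \<Otimes>\<^sub>M \<mu>)"

definition singular_kernel ::
  "'a::euclidean_space measure \<Rightarrow> 'a measure \<Rightarrow> ('a \<Rightarrow> 'a \<Rightarrow> complex) \<Rightarrow> bool" where
  "singular_kernel \<mu> \<nu> K \<longleftrightarrow>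
     (\<lambda>z. K (fst z) (snd z)) \<in> borel_measurable (kernel_measure \<mu> \<nu>) \<and>
     (\<forall>Q. compact Q \<and> Q \<inter> {z. fst z = snd z} = {} \<longrightarrow>
        (\<integral>\<^sup>+ z. ennreal ((norm (K (fst z) (snd z)))\<^sup>2) * indicator Q z \<partial>kernel_measure \<mu> \<nu>) < \<infinity>)"

definition fsupp :: "('a::euclidean_space \<Rightarrow> complex) \<Rightarrow> 'a set" where
  "fsupp f = closure {x. f x \<noteq> 0}"

definition Lp_norm :: "real \<Rightarrow> 'a measure \<Rightarrow> ('a \<Rightarrow> complex) \<Rightarrow> real" where
  "Lp_norm p M f = (\<integral> x. norm (f x) powr p \<partial>M) powr (1 / p)"

definition test_fun :: "('a::euclidean_space \<Rightarrow> complex) \<Rightarrow> bool" where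
  "test_fun f \<longleftrightarrow> f \<in> borel_measurable borel \<and> bounded (range f) \<and> compact (fsupp f)"

definition restrictedly_Lp_bounded ::
  "real \<Rightarrow> 'a::euclidean_space measure \<Rightarrow> 'a measure \<Rightarrow> ('a \<Rightarrow> 'a \<Rightarrow> complex) \<Rightarrow> real \<Rightarrow> bool" where
  "restrictedly_Lp_bounded p \<mu> \<nu> K C \<longleftrightarrow>
     (\<forall>f g. test_fun f \<and> test_fun g \<and>
        (\<exists>\<delta>>0. \<forall>x\<in>fsupp f. \<forall>y\<in>fsupp g. \<delta> \<le> dist x y) \<longrightarrow>
        norm (\<integral> z. K (fst z) (snd z) * f (snd z) * g (fst z) \<partial>kernel_measure \<mu> \<nu>)
          \<le> C * Lp_norm p \<mu> f * Lp_norm (p / (p - 1)) \<nu> g)"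

definition fourier :: "('a::euclidean_space \<Rightarrow> complex) \<Rightarrow> 'a \<Rightarrow> complex" where
  "fourier \<rho> s = (\<integral> x. \<rho> x * cis (- (s \<bullet> x)) \<partial>lborel)"

definition L1_norm :: "('a::euclidean_space \<Rightarrow> complex) \<Rightarrow> real" where
  "L1_norm \<rho> = (\<integral> x. norm (\<rho> x) \<partial>lborel)"

end

theory Submission
  imports Defs
begin

text \<open>Writing the Fourier transform as an integral, K(s,t) rho_hat((t - s)/eps) is the average,
  with weight rho(x) dx, of the modulated kernels K(s,t) exp(i x.(s - t)/eps). A modulation can be
  absorbed into the test functions, f(t) exp(-i x.t/eps) and g(s) exp(i x.s/eps), without changing
  their supports or L^p norms, so every modulated kernel is restrictedly bounded by C. Since
  K(s,t) f(t) g(s) is integrable when f and g have disjoint compact supports (K is locally L^2 off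
  the diagonal), Fubini's theorem bounds the averaged kernel by ||rho||_1 C, and subtracting it
  from K gives the bound (1 + ||rho||_1) C.\<close>

lemma sigma_finite_measure_radon:
  fixes M :: "'a::euclidean_space measure"
  assumes "radon_measure M"
  shows "sigma_finite_measure M"
proof
  have sets: "sets M = sets borel" and fin: "\<And>A. compact A \<Longrightarrow> emeasure M A < \<infinity>"
    using assms by (auto simp: radon_measure_def)
  let ?A = "range (\<lambda>n::nat. cball (0::'a) (real n))"
  have "\<exists>n::nat. x \<in> cball 0 (real n)" for x :: 'a
    using real_arch_simple[of "norm x"] by simp
  then have "\<Union> ?A = space M"
    using sets_eq_imp_space_eq[OF sets] by auto
  moreover have "?A \<subseteq> sets M"
    by (auto simp: sets borel_closed)
  moreover have "\<forall>a\<in>?A. emeasure M a \<noteq> \<infinity>"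
    using fin by (auto intro!: less_imp_neq)
  ultimately show "\<exists>A. countable A \<and> A \<subseteq> sets M \<and> \<Union> A = space M \<and> (\<forall>a\<in>A. emeasure M a \<noteq> \<infinity>)"
    by (intro exI[of _ ?A]) simp
qed

lemma sigma_finite_measure_completion:
  assumes "sigma_finite_measure M"
  shows "sigma_finite_measure (completion M)"
proof -
  obtain A where "countable A" "A \<subseteq> sets M" "\<Union> A = space M" "\<forall>a\<in>A. emeasure M a \<noteq> \<infinity>"
    using sigma_finite_measure.sigma_finite_countable[OF assms] by blast
  then show ?thesis
    unfolding sigma_finite_measure_def by (intro exI[of _ A]) auto
qed

lemma sets_pair_measure_radon:
  fixes \<mu> \<nu> :: "'a::euclidean_space measure"
  assumes "radon_measure \<mu>" "radon_measure \<nu>"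
  shows "sets (\<nu> \<Otimes>\<^sub>M \<mu>) = sets (borel :: ('a \<times> 'a) measure)"
proof -
  have "sets (\<nu> \<Otimes>\<^sub>M \<mu>) = sets (borel \<Otimes>\<^sub>M (borel :: 'a measure))"
    using assms by (intro sets_pair_measure_cong) (auto simp: radon_measure_def)
  then show ?thesis
    by (subst (asm) borel_prod)
qed

lemma sigma_finite_kernel_measure:
  assumes "radon_measure \<mu>" "radon_measure \<nu>"
  shows "sigma_finite_measure (kernel_measure \<mu> \<nu>)"
proof -
  interpret pair_sigma_finite \<nu> \<mu>
    using assms by (intro pair_sigma_finite.intro sigma_finite_measure_radon)
  show ?thesis
    unfolding kernel_measure_def
    by (rule sigma_finite_measure_completion) (rule sigma_finite_measure_axioms)
qed

lemma sets_kernel_measure: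
  fixes Q :: "('a::euclidean_space \<times> 'a) set"
  assumes "radon_measure \<mu>" "radon_measure \<nu>" "Q \<in> sets borel"
  shows "Q \<in> sets (kernel_measure \<mu> \<nu>)"
  using assms sets_pair_measure_radon[OF assms(1,2)] by (simp add: kernel_measure_def)

lemma borel_measurable_kernel_measure:
  fixes h :: "'a::euclidean_space \<times> 'a \<Rightarrow> 'b::topological_space"
  assumes "radon_measure \<mu>" "radon_measure \<nu>" "h \<in> borel_measurable borel"
  shows "h \<in> borel_measurable (kernel_measure \<mu> \<nu>)"
  unfolding kernel_measure_def
  using assms(3)
  by (intro measurable_completion)
    (simp add: measurable_cong_sets[OF sets_pair_measure_radon[OF assms(1,2)] refl])

lemma borel_measurable_kernel_measure_fst_snd:
  fixes h :: "'a::euclidean_space \<Rightarrow> 'b::topological_space"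
  assumes \<mu>: "radon_measure \<mu>" and \<nu>: "radon_measure \<nu>" and h: "h \<in> borel_measurable borel"
  shows "(\<lambda>z. h (fst z)) \<in> borel_measurable (kernel_measure \<mu> \<nu>)"
    and "(\<lambda>z. h (snd z)) \<in> borel_measurable (kernel_measure \<mu> \<nu>)"
proof -
  have "fst \<in> (borel :: ('a \<times> 'a) measure) \<rightarrow>\<^sub>M borel"
    and "snd \<in> (borel :: ('a \<times> 'a) measure) \<rightarrow>\<^sub>M borel"
    by (intro borel_measurable_continuous_onI continuous_intros)+
  then show "(\<lambda>z. h (fst z)) \<in> borel_measurable (kernel_measure \<mu> \<nu>)"
    and "(\<lambda>z. h (snd z)) \<in> borel_measurable (kernel_measure \<mu> \<nu>)"
    using h by (auto intro: borel_measurable_kernel_measure[OF \<mu> \<nu>] measurable_compose)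
qed

lemma borel_measurable_lborel_kernel_measure:
  fixes h :: "'a::euclidean_space \<times> ('a \<times> 'a) \<Rightarrow> 'b::topological_space"
  assumes "radon_measure \<mu>" "radon_measure \<nu>" "h \<in> borel_measurable borel"
  shows "h \<in> borel_measurable (lborel \<Otimes>\<^sub>M kernel_measure \<mu> \<nu>)"
proof -
  have "sets (lborel \<Otimes>\<^sub>M (\<nu> \<Otimes>\<^sub>M \<mu>)) = sets (borel \<Otimes>\<^sub>M (borel :: ('a \<times> 'a) measure))"
    by (intro sets_pair_measure_cong) (simp_all add: sets_pair_measure_radon[OF assms(1,2)])
  then have sets_eq: "sets (lborel \<Otimes>\<^sub>M (\<nu> \<Otimes>\<^sub>M \<mu>)) = sets (borel :: ('a \<times> ('a \<times> 'a)) measure)"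
    by (subst (asm) borel_prod)
  have h: "h \<in> borel_measurable (lborel \<Otimes>\<^sub>M (\<nu> \<Otimes>\<^sub>M \<mu>))"
    unfolding measurable_cong_sets[OF sets_eq refl] by (rule assms(3))
  have "(\<lambda>w. (fst w, snd w)) \<in> (lborel \<Otimes>\<^sub>M kernel_measure \<mu> \<nu>) \<rightarrow>\<^sub>M (lborel \<Otimes>\<^sub>M (\<nu> \<Otimes>\<^sub>M \<mu>))"
    unfolding kernel_measure_def
    by (rule measurable_Pair[OF measurable_fst
          measurable_compose[OF measurable_snd measurable_completion[OF measurable_ident_sets[OF refl]]]])
  from measurable_compose[OF this h] show ?thesis
    by simp
qed

lemma emeasure_kernel_measure_compact:
  fixes Q :: "('a::euclidean_space \<times> 'a) set"
  assumes \<mu>: "radon_measure \<mu>" and \<nu>: "radon_measure \<nu>" and Q: "compact Q"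
  shows "emeasure (kernel_measure \<mu> \<nu>) Q < \<infinity>"
proof -
  interpret pair_sigma_finite \<nu> \<mu>
    using \<mu> \<nu> by (intro pair_sigma_finite.intro sigma_finite_measure_radon)
  have compact: "compact (fst ` Q)" "compact (snd ` Q)"
    using Q by (intro compact_continuous_image continuous_intros; simp)+
  then have sets: "fst ` Q \<in> sets \<nu>" "snd ` Q \<in> sets \<mu>"
    using \<mu> \<nu> by (auto simp: radon_measure_def compact_imp_closed)
  have "emeasure (kernel_measure \<mu> \<nu>) Q \<le> emeasure (kernel_measure \<mu> \<nu>) (fst ` Q \<times> snd ` Q)"
    using sets by (intro emeasure_mono) (force, simp add: kernel_measure_def)
  also have "\<dots> = emeasure \<nu> (fst ` Q) * emeasure \<mu> (snd ` Q)"
    using sets by (simp add: kernel_measure_def M2.emeasure_pair_measure_Times)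
  also have "\<dots> < \<infinity>"
    using \<mu> \<nu> compact by (simp add: radon_measure_def ennreal_mult_less_top)
  finally show ?thesis .
qed

lemma borel_measurable_fourier:
  fixes \<rho> :: "'a::euclidean_space \<Rightarrow> complex"
  assumes "integrable lborel \<rho>"
  shows "fourier \<rho> \<in> borel_measurable borel"
proof -
  have sets_eq: "sets (borel \<Otimes>\<^sub>M lborel) = sets (borel :: ('a \<times> 'a) measure)"
  proof -
    have "sets (borel \<Otimes>\<^sub>M lborel) = sets (borel \<Otimes>\<^sub>M (borel :: 'a measure))"
      by (rule sets_pair_measure_cong) simp_all
    then show ?thesis
      by (subst (asm) borel_prod)
  qed
  have "(\<lambda>z::'a \<times> 'a. cis (- (fst z \<bullet> snd z))) \<in> borel_measurable borel"
    by (intro borel_measurable_continuous_onI continuous_intros)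
  then have [measurable]: "(\<lambda>z::'a \<times> 'a. cis (- (fst z \<bullet> snd z))) \<in> borel_measurable (borel \<Otimes>\<^sub>M lborel)"
    unfolding measurable_cong_sets[OF sets_eq refl] .
  have [measurable]: "\<rho> \<in> borel_measurable borel"
    using borel_measurable_integrable[OF assms] by simp
  have "(\<lambda>z. \<rho> (snd z) * cis (- (fst z \<bullet> snd z))) \<in> borel_measurable (borel \<Otimes>\<^sub>M lborel)"
    by measurable
  then show ?thesis
    unfolding fourier_def
    by (intro sigma_finite_measure.borel_measurable_lebesgue_integral[OF sigma_finite_lborel])
      (simp add: case_prod_beta)
qed

lemma norm_fourier_le_L1_norm: "norm (fourier \<rho> s) \<le> L1_norm \<rho>"
  unfolding fourier_def L1_norm_def
  using integral_norm_bound[of lborel "\<lambda>x. \<rho> x * cis (- (s \<bullet> x))"]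
  by (simp add: norm_mult)

lemma fourier_scaleR_diff:
  "fourier \<rho> (c *\<^sub>R (t - s)) = (\<integral>x. \<rho> x * cis ((c *\<^sub>R x) \<bullet> (s - t)) \<partial>lborel)"
  unfolding fourier_def
  by (intro Bochner_Integration.integral_cong refl) (simp add: inner_diff_right inner_commute algebra_simps)

lemma borel_measurable_fourier_scaleR_diff:
  fixes \<rho> :: "'a::euclidean_space \<Rightarrow> complex"
  assumes "integrable lborel \<rho>"
  shows "(\<lambda>z. fourier \<rho> (c *\<^sub>R (snd z - fst z))) \<in> borel_measurable borel"
proof -
  have "(\<lambda>z::'a \<times> 'a. c *\<^sub>R (snd z - fst z)) \<in> borel_measurable borel"
    by (intro borel_measurable_continuous_onI continuous_intros)
  then show ?thesis
    by (rule measurable_compose[OF _ borel_measurable_fourier[OF assms]])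
qed

lemma integrable_indicator_of_square_integrable:
  fixes k :: "'b \<Rightarrow> complex"
  assumes k: "k \<in> borel_measurable M" and Q: "Q \<in> sets M" "emeasure M Q < \<infinity>"
    and sq: "(\<integral>\<^sup>+z. ennreal ((norm (k z))\<^sup>2) * indicator Q z \<partial>M) < \<infinity>"
  shows "integrable M (\<lambda>z. k z * indicator Q z)"
proof (rule integrableI_bounded)
  show "(\<lambda>z. k z * indicator Q z) \<in> borel_measurable M"
    using k Q by measurable
  have "ennreal (norm (k z)) \<le> 1 + ennreal ((norm (k z))\<^sup>2)" for z
  proof -
    have "norm (k z) \<le> 1 + (norm (k z))\<^sup>2"
      using sum_squares_ge_zero[of "norm (k z) - 1/2" 0] by (simp add: power2_eq_square algebra_simps)
    then have "ennreal (norm (k z)) \<le> ennreal (1 + (norm (k z))\<^sup>2)"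
      by (rule ennreal_leI)
    then show ?thesis
      by (subst (asm) ennreal_plus) auto
  qed
  then have "(\<integral>\<^sup>+z. ennreal (norm (k z * indicator Q z)) \<partial>M)
      \<le> (\<integral>\<^sup>+z. indicator Q z + ennreal ((norm (k z))\<^sup>2) * indicator Q z \<partial>M)"
    by (intro nn_integral_mono) (simp split: split_indicator)
  also have "\<dots> = emeasure M Q + (\<integral>\<^sup>+z. ennreal ((norm (k z))\<^sup>2) * indicator Q z \<partial>M)"
    using k Q by (subst nn_integral_add) auto
  also have "\<dots> < \<infinity>"
    using Q sq by (simp add: ennreal_add_less_top)
  finally show "(\<integral>\<^sup>+z. ennreal (norm (k z * indicator Q z)) \<partial>M) < \<infinity>" .
qed

lemma integrable_singular_kernel_indicator:
  assumes \<mu>: "radon_measure \<mu>" and \<nu>: "radon_measure \<nu>" and K: "singular_kernel \<mu> \<nu> K"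
    and Q: "compact Q" "Q \<inter> {z. fst z = snd z} = {}"
  shows "integrable (kernel_measure \<mu> \<nu>) (\<lambda>z. K (fst z) (snd z) * indicator Q z)"
proof (rule integrable_indicator_of_square_integrable)
  show "(\<lambda>z. K (fst z) (snd z)) \<in> borel_measurable (kernel_measure \<mu> \<nu>)"
    using K by (simp add: singular_kernel_def)
  show "Q \<in> sets (kernel_measure \<mu> \<nu>)"
    using Q by (intro sets_kernel_measure[OF \<mu> \<nu>]) (simp add: compact_imp_closed)
  show "emeasure (kernel_measure \<mu> \<nu>) Q < \<infinity>"
    using Q by (intro emeasure_kernel_measure_compact[OF \<mu> \<nu>])
  show "(\<integral>\<^sup>+z. ennreal ((norm (K (fst z) (snd z)))\<^sup>2) * indicator Q z \<partial>kernel_measure \<mu> \<nu>) < \<infinity>"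
    using K Q by (simp add: singular_kernel_def)
qed

lemma mem_fsupp: "f x \<noteq> 0 \<Longrightarrow> x \<in> fsupp f"
  unfolding fsupp_def by (rule subsetD[OF closure_subset]) simp

lemma integrable_singular_kernel_test_fun:
  fixes f g :: "'a::euclidean_space \<Rightarrow> complex"
  assumes \<mu>: "radon_measure \<mu>" and \<nu>: "radon_measure \<nu>" and K: "singular_kernel \<mu> \<nu> K"
    and f: "test_fun f" and g: "test_fun g" and disjoint: "fsupp f \<inter> fsupp g = {}"
  shows "integrable (kernel_measure \<mu> \<nu>) (\<lambda>z. K (fst z) (snd z) * f (snd z) * g (fst z))"
proof -
  let ?Km = "kernel_measure \<mu> \<nu>"
  define Q where "Q = fsupp g \<times> fsupp f"
  have "compact Q"
    using f g by (simp add: Q_def test_fun_def compact_Times)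
  moreover have "Q \<inter> {z. fst z = snd z} = {}"
    using disjoint by (auto simp: Q_def)
  ultimately have KQ: "integrable ?Km (\<lambda>z. K (fst z) (snd z) * indicator Q z)"
    by (rule integrable_singular_kernel_indicator[OF \<mu> \<nu> K])
  obtain Bf Bg where Bf: "\<And>x. norm (f x) \<le> Bf" and Bg: "\<And>x. norm (g x) \<le> Bg"
    using f g by (auto simp: test_fun_def bounded_iff)
  have [measurable]: "(\<lambda>z. f (snd z)) \<in> borel_measurable ?Km" "(\<lambda>z. g (fst z)) \<in> borel_measurable ?Km"
    using f g by (simp_all add: test_fun_def borel_measurable_kernel_measure_fst_snd[OF \<mu> \<nu>])
  have [measurable]: "(\<lambda>z. K (fst z) (snd z)) \<in> borel_measurable ?Km"
    using K by (simp add: singular_kernel_def)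
  have bound: "norm (K (fst z) (snd z) * f (snd z) * g (fst z))
      \<le> norm (of_real (Bf * Bg) * (K (fst z) (snd z) * indicator Q z))" for z
  proof (cases "z \<in> Q")
    case True
    have "0 \<le> Bf" "0 \<le> Bg"
      using Bf Bg by (auto intro: order_trans[OF norm_ge_zero])
    moreover have "norm (f (snd z)) * norm (g (fst z)) \<le> Bf * Bg"
      using Bf Bg calculation by (intro mult_mono) auto
    then have "norm (K (fst z) (snd z)) * (norm (f (snd z)) * norm (g (fst z)))
        \<le> norm (K (fst z) (snd z)) * (Bf * Bg)"
      by (rule mult_left_mono) simp
    ultimately show ?thesis
      using True by (simp add: norm_mult abs_of_nonneg mult_ac)
  next
    case False
    then have "f (snd z) = 0 \<or> g (fst z) = 0"
      using mem_fsupp[of f] mem_fsupp[of g] by (auto simp: Q_def mem_Times_iff)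
    then show ?thesis
      by auto
  qed
  show ?thesis
    using bound
    by (intro Bochner_Integration.integrable_bound[OF integrable_mult_right[OF KQ, where c = "of_real (Bf * Bg)"]])
      simp_all
qed

lemma singular_kernel_mult_bounded:
  fixes m :: "'a::euclidean_space \<Rightarrow> 'a \<Rightarrow> complex"
  assumes \<mu>: "radon_measure \<mu>" and \<nu>: "radon_measure \<nu>" and K: "singular_kernel \<mu> \<nu> K"
    and m_meas: "(\<lambda>z. m (fst z) (snd z)) \<in> borel_measurable borel"
    and m_bound: "\<And>s t. norm (m s t) \<le> B"
  shows "singular_kernel \<mu> \<nu> (\<lambda>s t. K s t * m s t)"
  unfolding singular_kernel_def
proof (intro conjI allI impI)
  let ?Km = "kernel_measure \<mu> \<nu>"
  have [measurable]: "(\<lambda>z. K (fst z) (snd z)) \<in> borel_measurable ?Km"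
    using K by (simp add: singular_kernel_def)
  have [measurable]: "(\<lambda>z. m (fst z) (snd z)) \<in> borel_measurable ?Km"
    using m_meas by (rule borel_measurable_kernel_measure[OF \<mu> \<nu>])
  show "(\<lambda>z. K (fst z) (snd z) * m (fst z) (snd z)) \<in> borel_measurable ?Km"
    by measurable
  fix Q :: "('a \<times> 'a) set"
  assume Q: "compact Q \<and> Q \<inter> {z. fst z = snd z} = {}"
  then have "Q \<in> sets ?Km"
    by (intro sets_kernel_measure[OF \<mu> \<nu>]) (simp add: compact_imp_closed)
  then have [measurable]: "(\<lambda>z. ennreal ((norm (K (fst z) (snd z)))\<^sup>2) * indicator Q z) \<in> borel_measurable ?Km"
    by measurable
  have "ennreal ((norm (K s t * m s t))\<^sup>2) \<le> ennreal (B\<^sup>2) * ennreal ((norm (K s t))\<^sup>2)" for s t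
  proof -
    have "(norm (K s t * m s t))\<^sup>2 = (norm (K s t))\<^sup>2 * (norm (m s t))\<^sup>2"
      by (simp add: norm_mult power_mult_distrib)
    also have "\<dots> \<le> (norm (K s t))\<^sup>2 * B\<^sup>2"
      by (intro mult_left_mono power_mono m_bound) auto
    finally have "(norm (K s t * m s t))\<^sup>2 \<le> B\<^sup>2 * (norm (K s t))\<^sup>2"
      by (simp only: mult.commute)
    then show ?thesis
      by (simp add: ennreal_mult[symmetric] ennreal_leI)
  qed
  then have "(\<integral>\<^sup>+z. ennreal ((norm (K (fst z) (snd z) * m (fst z) (snd z)))\<^sup>2) * indicator Q z \<partial>?Km)
      \<le> (\<integral>\<^sup>+z. ennreal (B\<^sup>2) * (ennreal ((norm (K (fst z) (snd z)))\<^sup>2) * indicator Q z) \<partial>?Km)"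
    by (intro nn_integral_mono) (simp add: mult_right_mono flip: mult.assoc)
  also have "\<dots> = ennreal (B\<^sup>2) * (\<integral>\<^sup>+z. ennreal ((norm (K (fst z) (snd z)))\<^sup>2) * indicator Q z \<partial>?Km)"
    by (rule nn_integral_cmult) measurable
  also have "\<dots> < \<infinity>"
    using K Q by (simp add: singular_kernel_def ennreal_mult_less_top)
  finally show "(\<integral>\<^sup>+z. ennreal ((norm (K (fst z) (snd z) * m (fst z) (snd z)))\<^sup>2) * indicator Q z \<partial>?Km) < \<infinity>" .
qed

lemma
  fixes f :: "'a::euclidean_space \<Rightarrow> complex"
  assumes f: "test_fun f" and \<theta>: "continuous_on UNIV \<theta>"
  shows test_fun_modulate: "test_fun (\<lambda>t. f t * cis (\<theta> t))"
    and fsupp_modulate: "fsupp (\<lambda>t. f t * cis (\<theta> t)) = fsupp f"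
    and Lp_norm_modulate: "Lp_norm q M (\<lambda>t. f t * cis (\<theta> t)) = Lp_norm q M f"
proof -
  have norm_eq: "norm (f t * cis (\<theta> t)) = norm (f t)" for t
    by (simp add: norm_mult)
  show fsupp_eq: "fsupp (\<lambda>t. f t * cis (\<theta> t)) = fsupp f"
    by (simp add: fsupp_def)
  show "Lp_norm q M (\<lambda>t. f t * cis (\<theta> t)) = Lp_norm q M f"
    by (simp add: Lp_norm_def norm_eq)
  have "(\<lambda>t. cis (\<theta> t)) \<in> borel_measurable borel"
    by (intro borel_measurable_continuous_onI continuous_intros \<theta>)
  moreover have "bounded (range (\<lambda>t. f t * cis (\<theta> t)))"
    using f by (simp add: test_fun_def bounded_iff norm_eq)
  ultimately show "test_fun (\<lambda>t. f t * cis (\<theta> t))"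
    using f by (auto simp: test_fun_def fsupp_eq intro: borel_measurable_times)
qed

lemma restrictedly_Lp_bounded_modulate:
  assumes K: "restrictedly_Lp_bounded p \<mu> \<nu> K C"
  shows "restrictedly_Lp_bounded p \<mu> \<nu> (\<lambda>s t. K s t * cis (\<xi> \<bullet> (s - t))) C"
  unfolding restrictedly_Lp_bounded_def
proof (intro allI impI, elim conjE)
  fix f g :: "'a \<Rightarrow> complex"
  assume f: "test_fun f" and g: "test_fun g"
    and separated: "\<exists>\<delta>>0. \<forall>x\<in>fsupp f. \<forall>y\<in>fsupp g. \<delta> \<le> dist x y"
  define f' where "f' t = f t * cis (- (\<xi> \<bullet> t))" for t
  define g' where "g' s = g s * cis (\<xi> \<bullet> s)" for s
  have f': "test_fun f'" "fsupp f' = fsupp f" "Lp_norm p \<mu> f' = Lp_norm p \<mu> f"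
    unfolding f'_def by (intro test_fun_modulate fsupp_modulate Lp_norm_modulate f continuous_intros)+
  have g': "test_fun g'" "fsupp g' = fsupp g" "Lp_norm (p / (p - 1)) \<nu> g' = Lp_norm (p / (p - 1)) \<nu> g"
    unfolding g'_def by (intro test_fun_modulate fsupp_modulate Lp_norm_modulate g continuous_intros)+
  have "\<exists>\<delta>>0. \<forall>x\<in>fsupp f'. \<forall>y\<in>fsupp g'. \<delta> \<le> dist x y"
    using separated by (simp only: f'(2) g'(2))
  then have "norm (\<integral>z. K (fst z) (snd z) * f' (snd z) * g' (fst z) \<partial>kernel_measure \<mu> \<nu>)
      \<le> C * Lp_norm p \<mu> f' * Lp_norm (p / (p - 1)) \<nu> g'"
    using K f'(1) g'(1) unfolding restrictedly_Lp_bounded_def by blast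
  then have bound: "norm (\<integral>z. K (fst z) (snd z) * f' (snd z) * g' (fst z) \<partial>kernel_measure \<mu> \<nu>)
      \<le> C * Lp_norm p \<mu> f * Lp_norm (p / (p - 1)) \<nu> g"
    by (simp only: f'(3) g'(3))
  have integrand: "K s t * cis (\<xi> \<bullet> (s - t)) * f t * g s = K s t * f' t * g' s" for s t
  proof -
    have "cis (\<xi> \<bullet> (s - t)) = cis (\<xi> \<bullet> s) * cis (- (\<xi> \<bullet> t))"
      by (simp add: cis_mult inner_diff_right)
    then show ?thesis
      by (simp add: f'_def g'_def mult_ac)
  qed
  show "norm (\<integral>z. K (fst z) (snd z) * cis (\<xi> \<bullet> (fst z - snd z)) * f (snd z) * g (fst z)
      \<partial>kernel_measure \<mu> \<nu>) \<le> C * Lp_norm p \<mu> f * Lp_norm (p / (p - 1)) \<nu> g"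
    using bound by (simp only: integrand)
qed

lemma integrable_modulated_singular_kernel_Fubini:
  fixes \<rho> f g :: "'a::euclidean_space \<Rightarrow> complex"
  assumes \<mu>: "radon_measure \<mu>" and \<nu>: "radon_measure \<nu>" and K: "singular_kernel \<mu> \<nu> K"
    and \<rho>: "integrable lborel \<rho>" and f: "test_fun f" and g: "test_fun g"
    and disjoint: "fsupp f \<inter> fsupp g = {}"
  shows "integrable (lborel \<Otimes>\<^sub>M kernel_measure \<mu> \<nu>) (\<lambda>(x, z).
    \<rho> x * (K (fst z) (snd z) * cis ((c *\<^sub>R x) \<bullet> (fst z - snd z)) * f (snd z) * g (fst z)))"
proof -
  let ?Km = "kernel_measure \<mu> \<nu>"
  define H where "H x z = K (fst z) (snd z) * cis ((c *\<^sub>R x) \<bullet> (fst z - snd z)) * f (snd z) * g (fst z)"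
    for x z
  interpret P: pair_sigma_finite lborel ?Km
    by (intro pair_sigma_finite.intro sigma_finite_lborel sigma_finite_kernel_measure[OF \<mu> \<nu>])
  have G_integrable: "integrable ?Km (\<lambda>z. K (fst z) (snd z) * f (snd z) * g (fst z))"
    by (rule integrable_singular_kernel_test_fun[OF \<mu> \<nu> K f g disjoint])
  have cis_meas: "(\<lambda>z. cis ((c *\<^sub>R x) \<bullet> (fst z - snd z))) \<in> borel_measurable borel" for x :: 'a
    by (intro borel_measurable_continuous_onI continuous_intros)
  have H_integrable: "integrable ?Km (H x)" for x
    unfolding H_def
    using integrable_singular_kernel_test_fun[OF \<mu> \<nu> _ f g disjoint]
      singular_kernel_mult_bounded[OF \<mu> \<nu> K cis_meas[of x], of 1] by simp
  have F_meas: "(\<lambda>(x, z). \<rho> x * H x z) \<in> borel_measurable (lborel \<Otimes>\<^sub>M ?Km)"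
  proof -
    have [measurable]: "\<rho> \<in> borel_measurable lborel"
      using \<rho> by (rule borel_measurable_integrable)
    have [measurable]: "(\<lambda>z. K (fst z) (snd z) * f (snd z) * g (fst z)) \<in> borel_measurable ?Km"
      using G_integrable by (rule borel_measurable_integrable)
    have [measurable]: "(\<lambda>w. cis ((c *\<^sub>R fst w) \<bullet> (fst (snd w) - snd (snd w))))
        \<in> borel_measurable (lborel \<Otimes>\<^sub>M ?Km)"
      by (intro borel_measurable_lborel_kernel_measure[OF \<mu> \<nu>] borel_measurable_continuous_onI
          continuous_intros)
    have "(\<lambda>w. \<rho> (fst w) * cis ((c *\<^sub>R fst w) \<bullet> (fst (snd w) - snd (snd w)))
        * (K (fst (snd w)) (snd (snd w)) * f (snd (snd w)) * g (fst (snd w))))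
        \<in> borel_measurable (lborel \<Otimes>\<^sub>M ?Km)"
      by measurable
    then show ?thesis
      by (simp add: H_def case_prod_beta mult_ac)
  qed
  have "norm (H x z) = norm (K (fst z) (snd z) * f (snd z) * g (fst z))" for x z
    by (simp add: H_def norm_mult)
  then have "integrable (lborel \<Otimes>\<^sub>M ?Km) (\<lambda>(x, z). \<rho> x * H x z)"
    using F_meas G_integrable H_integrable \<rho> by (intro P.Fubini_integrable) (simp_all add: norm_mult)
  then show ?thesis
    by (simp add: H_def)
qed

lemma restrictedly_Lp_bounded_fourier_multiplier:
  fixes \<rho> :: "'a::euclidean_space \<Rightarrow> complex"
  assumes \<mu>: "radon_measure \<mu>" and \<nu>: "radon_measure \<nu>" and K: "singular_kernel \<mu> \<nu> K"
    and bounded: "restrictedly_Lp_bounded p \<mu> \<nu> K C" and \<rho>: "integrable lborel \<rho>"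
  shows "restrictedly_Lp_bounded p \<mu> \<nu> (\<lambda>s t. K s t * fourier \<rho> (c *\<^sub>R (t - s))) (L1_norm \<rho> * C)"
  unfolding restrictedly_Lp_bounded_def
proof (intro allI impI, elim conjE)
  let ?Km = "kernel_measure \<mu> \<nu>"
  fix f g :: "'a \<Rightarrow> complex"
  assume f: "test_fun f" and g: "test_fun g"
    and separated: "\<exists>\<delta>>0. \<forall>x\<in>fsupp f. \<forall>y\<in>fsupp g. \<delta> \<le> dist x y"
  let ?A = "Lp_norm p \<mu> f * Lp_norm (p / (p - 1)) \<nu> g"
  define H where "H x z = K (fst z) (snd z) * cis ((c *\<^sub>R x) \<bullet> (fst z - snd z)) * f (snd z) * g (fst z)"
    for x z
  have "fsupp f \<inter> fsupp g = {}"
    using separated by force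
  then have F_integrable: "integrable (lborel \<Otimes>\<^sub>M ?Km) (\<lambda>(x, z). \<rho> x * H x z)"
    unfolding H_def by (rule integrable_modulated_singular_kernel_Fubini[OF \<mu> \<nu> K \<rho> f g])
  have H_bound: "norm (\<integral>z. H x z \<partial>?Km) \<le> C * ?A" for x
    using restrictedly_Lp_bounded_modulate[OF bounded, of "c *\<^sub>R x"] f g separated
    unfolding restrictedly_Lp_bounded_def H_def by (simp add: mult.assoc)
  interpret P: pair_sigma_finite lborel ?Km
    by (intro pair_sigma_finite.intro sigma_finite_lborel sigma_finite_kernel_measure[OF \<mu> \<nu>])
  have "(\<integral>z. K (fst z) (snd z) * fourier \<rho> (c *\<^sub>R (snd z - fst z)) * f (snd z) * g (fst z) \<partial>?Km)
      = (\<integral>z. (\<integral>x. \<rho> x * H x z \<partial>lborel) \<partial>?Km)"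
    by (intro Bochner_Integration.integral_cong refl)
      (simp add: fourier_scaleR_diff H_def mult_ac
        flip: integral_mult_left_zero integral_mult_right_zero)
  also have "\<dots> = (\<integral>x. \<rho> x * (\<integral>z. H x z \<partial>?Km) \<partial>lborel)"
    using P.Fubini_integral[OF F_integrable] by simp
  finally have "norm (\<integral>z. K (fst z) (snd z) * fourier \<rho> (c *\<^sub>R (snd z - fst z)) * f (snd z) * g (fst z) \<partial>?Km)
      \<le> (\<integral>x. norm (\<rho> x * (\<integral>z. H x z \<partial>?Km)) \<partial>lborel)"
    by (simp only: integral_norm_bound)
  also have "\<dots> \<le> (\<integral>x. norm (\<rho> x) * (C * ?A) \<partial>lborel)"
    using integrable_norm[OF P.integrable_fst'[OF F_integrable]] \<rho> H_bound
    by (intro integral_mono) (auto simp: norm_mult intro: mult_left_mono)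
  also have "\<dots> = L1_norm \<rho> * C * Lp_norm p \<mu> f * Lp_norm (p / (p - 1)) \<nu> g"
    by (simp add: L1_norm_def mult_ac)
  finally show "norm (\<integral>z. K (fst z) (snd z) * fourier \<rho> (c *\<^sub>R (snd z - fst z)) * f (snd z) * g (fst z) \<partial>?Km)
      \<le> L1_norm \<rho> * C * Lp_norm p \<mu> f * Lp_norm (p / (p - 1)) \<nu> g" .
qed

lemma restrictedly_Lp_bounded_diff:
  assumes \<mu>: "radon_measure \<mu>" and \<nu>: "radon_measure \<nu>"
    and K\<^sub>1: "singular_kernel \<mu> \<nu> K\<^sub>1" "restrictedly_Lp_bounded p \<mu> \<nu> K\<^sub>1 C\<^sub>1"
    and K\<^sub>2: "singular_kernel \<mu> \<nu> K\<^sub>2" "restrictedly_Lp_bounded p \<mu> \<nu> K\<^sub>2 C\<^sub>2"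
  shows "restrictedly_Lp_bounded p \<mu> \<nu> (\<lambda>s t. K\<^sub>1 s t - K\<^sub>2 s t) (C\<^sub>1 + C\<^sub>2)"
  unfolding restrictedly_Lp_bounded_def
proof (intro allI impI, elim conjE)
  fix f g :: "'a \<Rightarrow> complex"
  assume f: "test_fun f" and g: "test_fun g"
    and separated: "\<exists>\<delta>>0. \<forall>x\<in>fsupp f. \<forall>y\<in>fsupp g. \<delta> \<le> dist x y"
  let ?I = "\<lambda>K. \<integral>z. K (fst z) (snd z) * f (snd z) * g (fst z) \<partial>kernel_measure \<mu> \<nu>"
  let ?A = "Lp_norm p \<mu> f * Lp_norm (p / (p - 1)) \<nu> g"
  have disjoint: "fsupp f \<inter> fsupp g = {}"
    using separated by force
  have "?I (\<lambda>s t. K\<^sub>1 s t - K\<^sub>2 s t) = ?I K\<^sub>1 - ?I K\<^sub>2"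
    using integrable_singular_kernel_test_fun[OF \<mu> \<nu> _ f g disjoint] K\<^sub>1(1) K\<^sub>2(1)
    by (simp add: left_diff_distrib flip: Bochner_Integration.integral_diff)
  then have "norm (?I (\<lambda>s t. K\<^sub>1 s t - K\<^sub>2 s t)) \<le> norm (?I K\<^sub>1) + norm (?I K\<^sub>2)"
    by (simp add: norm_triangle_ineq4)
  also have "\<dots> \<le> C\<^sub>1 * ?A + C\<^sub>2 * ?A"
    using K\<^sub>1(2) K\<^sub>2(2) f g separated unfolding restrictedly_Lp_bounded_def
    by (intro add_mono) (simp_all add: mult.assoc)
  finally show "norm (?I (\<lambda>s t. K\<^sub>1 s t - K\<^sub>2 s t)) \<le> (C\<^sub>1 + C\<^sub>2) * Lp_norm p \<mu> f * Lp_norm (p / (p - 1)) \<nu> g"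
    by (simp add: algebra_simps)
qed

theorem lemma2p1:
  fixes \<mu> \<nu> :: "'a::euclidean_space measure"
    and K :: "'a \<Rightarrow> 'a \<Rightarrow> complex" and \<rho> :: "'a \<Rightarrow> complex"
    and p C \<epsilon> :: real
  assumes "1 < p"
    and "radon_measure \<mu>" and "radon_measure \<nu>"
    and "singular_kernel \<mu> \<nu> K"
    and "restrictedly_Lp_bounded p \<mu> \<nu> K C"
    and "integrable lborel \<rho>"
    and "0 < \<epsilon>"
  shows "singular_kernel \<mu> \<nu> (\<lambda>s t. K s t * (1 - fourier \<rho> ((1 / \<epsilon>) *\<^sub>R (t - s))))
    \<and> restrictedly_Lp_bounded p \<mu> \<nu> (\<lambda>s t. K s t * (1 - fourier \<rho> ((1 / \<epsilon>) *\<^sub>R (t - s))))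
         ((1 + L1_norm \<rho>) * C)"
proof
  note \<mu> = assms(2) and \<nu> = assms(3) and K = assms(4) and bounded = assms(5) and \<rho> = assms(6)
  define \<phi> where "\<phi> s t = fourier \<rho> ((1 / \<epsilon>) *\<^sub>R (t - s))" for s t
  have \<phi>_meas: "(\<lambda>z. \<phi> (fst z) (snd z)) \<in> borel_measurable borel"
    unfolding \<phi>_def by (rule borel_measurable_fourier_scaleR_diff[OF \<rho>])
  have \<phi>_bound: "norm (\<phi> s t) \<le> L1_norm \<rho>" for s t
    unfolding \<phi>_def by (rule norm_fourier_le_L1_norm)
  have "norm (1 - \<phi> s t) \<le> 1 + L1_norm \<rho>" for s t
    using norm_triangle_ineq4[of 1 "\<phi> s t"] \<phi>_bound[of s t] by simp
  with \<phi>_meas show "singular_kernel \<mu> \<nu> (\<lambda>s t. K s t * (1 - fourier \<rho> ((1 / \<epsilon>) *\<^sub>R (t - s))))"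
    unfolding \<phi>_def[symmetric] by (intro singular_kernel_mult_bounded[OF \<mu> \<nu> K]) simp_all
  have "restrictedly_Lp_bounded p \<mu> \<nu> (\<lambda>s t. K s t - K s t * \<phi> s t) (C + L1_norm \<rho> * C)"
    using singular_kernel_mult_bounded[OF \<mu> \<nu> K \<phi>_meas \<phi>_bound]
      restrictedly_Lp_bounded_fourier_multiplier[OF \<mu> \<nu> K bounded \<rho>]
    unfolding \<phi>_def by (intro restrictedly_Lp_bounded_diff[OF \<mu> \<nu> K bounded])
  then show "restrictedly_Lp_bounded p \<mu> \<nu> (\<lambda>s t. K s t * (1 - fourier \<rho> ((1 / \<epsilon>) *\<^sub>R (t - s))))
      ((1 + L1_norm \<rho>) * C)"
    by (simp add: \<phi>_def algebra_simps)
qed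

end
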